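(* With the operators $h_1 = Y\otimes I\otimes Z\otimes X\otimes X\otimes Y$, $h_2 = Z\otimes X\otimes I\otimes I\otimes X\otimes Z$, $h_3 = I\otimes Z\otimes X\otimes X\otimes X\otimes X$, $h_5 = Z\otimes Z\otimes Z\otimes I\otimes Z\otimes I$ (convention $Y=ZX$), let $\widetilde S=\langle h_1,h_2,h_3,h_5\rangle$ and let the gauge group be $H=\langle X_4,\ Z_4Z_6\rangle$. Then $X_4$ and $Z_4Z_6$ commute with every element of $\widetilde S$, and for every pair $E_a,E_b$ of elements of $\{I\}\cup\{X_i,Y_i,Z_i:i=1,\dots,6\}$, the operator $E_a^\dagger E_b$ either anticommutes with at least one of $h_1,h_2,h_3,h_5$ or lies (up to phase) in the group generated by $\widetilde S\cup H$. Hence this is a subsystem code with $n=6$ physical qubits, $k=1$ logical qubit, $r=1$ gauge qubit, and distance $d=3$, which saturates the subsystem Singleton bound $n-k-r\ge 2(d-1)$.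
   Context: $X,Y,Z$ denote the single-qubit Pauli matrices and $P_i$ denotes the six-qubit operator acting as $P$ on qubit $i$ and as identity elsewhere. For a subsystem code with stabilizer $\widetilde S$ and gauge group generated by $\widetilde S$ and $H$, a set of errors is correctable if every product $E_a^\dagger E_b$ of two errors either anticommutes with some element of $\widetilde S$ or lies (up to phase) in the group generated by $\widetilde S$ and $H$. *)

theory Defs
  imports Complex_Main
begin

text \<open>Single-qubit Pauli matrices, with the paper's convention Y = Z X.
  pm P Q = (c, R) means the matrix product P Q equals c R.\<close>
datatype pauli = PI | PX | PY | PZ

fun pm :: "pauli \<Rightarrow> pauli \<Rightarrow> complex \<times> pauli" where
  "pm PI q = (1, q)"
| "pm p PI = (1, p)"
| "pm PX PX = (1, PI)"
| "pm PY PY = (-1, PI)"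
| "pm PZ PZ = (1, PI)"
| "pm PX PZ = (-1, PY)"
| "pm PZ PX = (1, PY)"
| "pm PX PY = (-1, PZ)"
| "pm PY PX = (1, PZ)"
| "pm PZ PY = (1, PX)"
| "pm PY PZ = (-1, PX)"

text \<open>Conjugate transpose: X, Z are Hermitian; Y = ZX has Y^dagger = XZ = -Y.\<close>
fun pdag :: "pauli \<Rightarrow> complex" where
  "pdag PY = -1"
| "pdag _ = 1"

text \<open>A six-qubit operator c * (P_1 \<otimes> ... \<otimes> P_6); qubits indexed 1..6,
  the tensor factor map is PI outside {1..6}.\<close>
type_synonym op = "complex \<times> (nat \<Rightarrow> pauli)"

definition qubits :: "nat set" where "qubits = {1..6}"

definition opmul :: "op \<Rightarrow> op \<Rightarrow> op" where
  "opmul a b = (fst a * fst b * (\<Prod>j\<in>qubits. fst (pm (snd a j) (snd b j))),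
                (\<lambda>j. if j \<in> qubits then snd (pm (snd a j) (snd b j)) else PI))"

definition opone :: op where "opone = (1, \<lambda>_. PI)"

definition opneg :: "op \<Rightarrow> op" where "opneg a = (- fst a, snd a)"

definition opdag :: "op \<Rightarrow> op" where
  "opdag a = (cnj (fst a) * (\<Prod>j\<in>qubits. pdag (snd a j)), snd a)"

definition tens :: "pauli list \<Rightarrow> op" where
  "tens ps = (1, \<lambda>j. if j \<in> qubits then ps ! (j - 1) else PI)"

definition onq :: "nat \<Rightarrow> pauli \<Rightarrow> op" where
  "onq i p = (1, (\<lambda>_. PI)(i := p))"

definition commute :: "op \<Rightarrow> op \<Rightarrow> bool" where
  "commute a b \<longleftrightarrow> opmul a b = opmul b a"

definition anticommute :: "op \<Rightarrow> op \<Rightarrow> bool" where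
  "anticommute a b \<longleftrightarrow> opmul a b = opneg (opmul b a)"

inductive_set gen :: "op set \<Rightarrow> op set" for G where
  gen_one: "opone \<in> gen G"
| gen_base: "g \<in> G \<Longrightarrow> g \<in> gen G"
| gen_mul: "a \<in> gen G \<Longrightarrow> b \<in> gen G \<Longrightarrow> opmul a b \<in> gen G"

definition in_up_to_phase :: "op \<Rightarrow> op set \<Rightarrow> bool" where
  "in_up_to_phase a K \<longleftrightarrow> (\<exists>c. c \<noteq> 0 \<and> (c * fst a, snd a) \<in> K)"

definition h1 :: op where "h1 = tens [PY, PI, PZ, PX, PX, PY]"
definition h2 :: op where "h2 = tens [PZ, PX, PI, PI, PX, PZ]"
definition h3 :: op where "h3 = tens [PI, PZ, PX, PX, PX, PX]"
definition h5 :: op where "h5 = tens [PZ, PZ, PZ, PI, PZ, PI]"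

definition Stab :: "op set" where "Stab = {h1, h2, h3, h5}"
definition Gauge :: "op set" where "Gauge = {onq 4 PX, opmul (onq 4 PZ) (onq 6 PZ)}"

definition Errs :: "op set" where
  "Errs = {opone} \<union> {onq i p | i p. i \<in> qubits \<and> p \<in> {PX, PY, PZ}}"

end

theory Submission
  imports Defs
begin

(* Two Pauli operators commute or anticommute according to a sign:
   the product over the qubits of -1 for every position where both factors are
   non-identity and different.  We define this sign comm_sign a b and prove the
   swap law  a b = comm_sign a b * (b a)  (as operators), which turns commute and
   anticommute into "sign = 1" and "sign = -1".  The sign is multiplicative in its
   second argument, so an operator commuting with the generators of a group gen G
   commutes with all of it; this gives the first conjunct.
   For the second conjunct, membership up to phase depends only on the Pauli
   pattern of an operator, and the adjoint does not change the pattern.  Every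
   element of Errs is some onq i p, so it remains to check the finitely many
   patterns of products onq i p * onq k q: each either anticommutes with one of
   h1, h2, h3, h5 or equals the pattern of one of the four elements I, X_4,
   Z_4 Z_6, X_4 Z_4 Z_6 of the gauge group. *)

definition pauli_anti :: "pauli \<Rightarrow> pauli \<Rightarrow> bool" where
  "pauli_anti p q \<longleftrightarrow> p \<noteq> PI \<and> q \<noteq> PI \<and> p \<noteq> q"

definition pauli_sign :: "pauli \<Rightarrow> pauli \<Rightarrow> complex" where
  "pauli_sign p q = (if pauli_anti p q then -1 else 1)"

lemma pm_swap_phase: "fst (pm p q) = pauli_sign p q * fst (pm q p)"
  by (cases p; cases q; simp add: pauli_sign_def pauli_anti_def)

lemma pm_swap_pauli: "snd (pm p q) = snd (pm q p)"
  by (cases p; cases q; simp)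

lemma pm_phase_nonzero: "fst (pm p q) \<noteq> 0"
  by (cases p; cases q; simp)

lemma pauli_sign_mult: "pauli_sign p (snd (pm q r)) = pauli_sign p q * pauli_sign p r"
  by (cases p; cases q; cases r; simp add: pauli_sign_def pauli_anti_def)

lemma pauli_all: "(\<forall>p. P p) \<longleftrightarrow> P PI \<and> P PX \<and> P PY \<and> P PZ"
  by (metis pauli.exhaust)

lemma qubits_eq: "qubits = {1, 2, 3, 4, 5, 6}"
  by (auto simp: qubits_def)

lemma finite_qubits: "finite qubits"
  by (simp add: qubits_def)

definition comm_sign :: "op \<Rightarrow> op \<Rightarrow> complex" where
  "comm_sign a b = (\<Prod>j\<in>qubits. pauli_sign (snd a j) (snd b j))"

lemma opmul_swap: "opmul a b = (comm_sign a b * fst (opmul b a), snd (opmul b a))"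
proof -
  have "(\<Prod>j\<in>qubits. fst (pm (snd a j) (snd b j)))
      = comm_sign a b * (\<Prod>j\<in>qubits. fst (pm (snd b j) (snd a j)))"
    unfolding comm_sign_def prod.distrib[symmetric] by (rule prod.cong) (auto intro: pm_swap_phase)
  moreover have "(\<lambda>j. snd (pm (snd a j) (snd b j))) = (\<lambda>j. snd (pm (snd b j) (snd a j)))"
    by (rule ext) (rule pm_swap_pauli)
  ultimately show ?thesis
    by (simp add: opmul_def) (metis (no_types, lifting))
qed

lemma commute_iff_sign:
  assumes "fst (opmul b a) \<noteq> 0"
  shows "commute a b \<longleftrightarrow> comm_sign a b = 1"
  using assms by (subst commute_def, subst opmul_swap) (simp add: prod_eq_iff)

lemma anticommute_iff_sign:
  assumes "fst (opmul b a) \<noteq> 0"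
  shows "anticommute a b \<longleftrightarrow> comm_sign a b = -1"
proof -
  have "anticommute a b \<longleftrightarrow> comm_sign a b * fst (opmul b a) = -1 * fst (opmul b a)"
    by (subst anticommute_def, subst opmul_swap) (simp add: opneg_def prod_eq_iff)
  then show ?thesis using assms by (simp only: mult_cancel_right) simp
qed

lemma snd_opmul:
  "snd (opmul a b) j = (if j \<in> qubits then snd (pm (snd a j) (snd b j)) else PI)"
  by (simp add: opmul_def)

lemma snd_opmul_opdag: "snd (opmul (opdag a) b) = snd (opmul a b)"
  unfolding opmul_def opdag_def snd_conv ..

lemma comm_sign_mult: "comm_sign c (opmul a b) = comm_sign c a * comm_sign c b"
  unfolding comm_sign_def prod.distrib[symmetric]
  by (rule prod.cong) (auto simp: snd_opmul pauli_sign_mult)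

lemma comm_sign_same_pattern: "snd a = snd a' \<Longrightarrow> comm_sign a b = comm_sign a' b"
  by (simp add: comm_sign_def)

lemma opmul_phase_nonzero: "fst a \<noteq> 0 \<Longrightarrow> fst b \<noteq> 0 \<Longrightarrow> fst (opmul a b) \<noteq> 0"
  using finite_qubits by (simp add: opmul_def pm_phase_nonzero)

lemma opdag_phase_nonzero: "fst a \<noteq> 0 \<Longrightarrow> fst (opdag a) \<noteq> 0"
proof -
  have "pdag p \<noteq> 0" for p by (cases p) simp_all
  then show "fst a \<noteq> 0 \<Longrightarrow> fst (opdag a) \<noteq> 0"
    using finite_qubits by (simp add: opdag_def)
qed

lemma gen_phase_nonzero:
  assumes "\<forall>g\<in>G. fst g \<noteq> 0" and "s \<in> gen G"
  shows "fst s \<noteq> 0"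
  using assms(2) by induction (use assms(1) in \<open>auto simp: opone_def opmul_phase_nonzero\<close>)

lemma commute_gen:
  assumes c: "fst c \<noteq> 0" and G: "\<forall>g\<in>G. fst g \<noteq> 0"
    and comm: "\<forall>g\<in>G. commute c g" and s: "s \<in> gen G"
  shows "commute c s"
proof -
  have "comm_sign c s = 1"
    using s
  proof induction
    case gen_one
    show ?case by (simp add: comm_sign_def opone_def pauli_sign_def pauli_anti_def)
  next
    case (gen_base g)
    then show ?case
      using comm commute_iff_sign opmul_phase_nonzero c G by blast
  next
    case (gen_mul a b)
    then show ?case by (simp add: comm_sign_mult)
  qed
  then show ?thesis
    using commute_iff_sign opmul_phase_nonzero c gen_phase_nonzero[OF G s] by blast
qed

lemma in_up_to_phase_pattern:
  assumes "x \<in> K" "fst x \<noteq> 0" "snd a = snd x" "fst a \<noteq> 0"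
  shows "in_up_to_phase a K"
  unfolding in_up_to_phase_def
proof (intro exI conjI)
  show "fst x / fst a \<noteq> 0" using assms by simp
  have "(fst x / fst a * fst a, snd a) = x" using assms by (simp add: prod_eq_iff)
  then show "(fst x / fst a * fst a, snd a) \<in> K" using assms by simp
qed

lemma pattern_eqI:
  assumes "\<forall>j. j \<notin> qubits \<longrightarrow> v j = PI" "\<forall>j. j \<notin> qubits \<longrightarrow> w j = PI"
    and "\<forall>j\<in>qubits. v j = w j"
  shows "v = w"
  using assms by (metis ext)

lemma stab_phase: "h \<in> Stab \<Longrightarrow> fst h = 1"
  by (auto simp: Stab_def h1_def h2_def h3_def h5_def tens_def)

lemma onq_phase: "fst (onq i p) = 1"
  by (simp add: onq_def)

lemma stab_gauge_phase_nonzero: "\<forall>g\<in>Stab \<union> Gauge. fst g \<noteq> 0"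
proof -
  have "fst (opmul (onq 4 PZ) (onq 6 PZ)) \<noteq> 0"
    by (rule opmul_phase_nonzero) (simp_all add: onq_phase)
  then show ?thesis by (auto simp: stab_phase Gauge_def onq_phase)
qed

lemma gauge_commutes_stab:
  assumes g: "g \<in> Gauge" and h: "h \<in> Stab"
  shows "commute g h"
proof -
  have "fst (opmul h g) \<noteq> 0"
    using g h stab_gauge_phase_nonzero by (intro opmul_phase_nonzero) blast+
  moreover have "\<forall>h\<in>Stab. \<forall>g\<in>Gauge. comm_sign g h = 1"
    unfolding Stab_def Gauge_def
    by (simp add: h1_def h2_def h3_def h5_def tens_def qubits_eq onq_def snd_opmul
      comm_sign_def pauli_sign_def pauli_anti_def)
  then have "comm_sign g h = 1" using g h by blast
  ultimately show ?thesis by (simp add: commute_iff_sign)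
qed

lemma gauge_commutes_stab_group:
  "\<forall>s \<in> gen Stab. commute (onq 4 PX) s \<and> commute (opmul (onq 4 PZ) (onq 6 PZ)) s"
  using commute_gen[of _ Stab] gauge_commutes_stab stab_gauge_phase_nonzero
  by (simp add: Gauge_def)

lemma errs_single_qubit: "E \<in> Errs \<Longrightarrow> \<exists>i\<in>qubits. \<exists>p. E = onq i p"
proof -
  have "opone = onq 1 PI" by (simp add: opone_def onq_def fun_upd_idem)
  moreover have "1 \<in> qubits" by (simp add: qubits_def)
  ultimately show "E \<in> Errs \<Longrightarrow> \<exists>i\<in>qubits. \<exists>p. E = onq i p"
    unfolding Errs_def by blast
qed

definition gauge_reps :: "op set" where
  "gauge_reps = {opone, onq 4 PX, opmul (onq 4 PZ) (onq 6 PZ),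
                 opmul (onq 4 PX) (opmul (onq 4 PZ) (onq 6 PZ))}"

lemma error_products_checked:
  "\<forall>i\<in>qubits. \<forall>k\<in>qubits. \<forall>p q.
     (\<exists>h\<in>Stab. comm_sign (opmul (onq i p) (onq k q)) h = -1)
   \<or> (\<exists>x\<in>gauge_reps.
        \<forall>j\<in>qubits. snd (opmul (onq i p) (onq k q)) j = snd x j)"
  unfolding pauli_all Stab_def gauge_reps_def
  by (simp add: h1_def h2_def h3_def h5_def tens_def qubits_eq onq_def opone_def
      snd_opmul comm_sign_def pauli_sign_def pauli_anti_def)

lemma gauge_reps_in_group: "gauge_reps \<subseteq> gen (Stab \<union> Gauge)"
  by (auto simp: gauge_reps_def Gauge_def intro: gen.intros)

lemma gauge_reps_outside: "x \<in> gauge_reps \<Longrightarrow> j \<notin> qubits \<Longrightarrow> snd x j = PI"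
  by (auto simp: gauge_reps_def opone_def onq_def snd_opmul qubits_def)

lemma errors_detected_or_gauge:
  assumes a: "Ea \<in> Errs" and b: "Eb \<in> Errs"
  shows "(\<exists>h \<in> Stab. anticommute (opmul (opdag Ea) Eb) h)
       \<or> in_up_to_phase (opmul (opdag Ea) Eb) (gen (Stab \<union> Gauge))"
proof -
  obtain i p k q where i: "i \<in> qubits" and k: "k \<in> qubits"
    and E: "Ea = onq i p" "Eb = onq k q"
    using errs_single_qubit[OF a] errs_single_qubit[OF b] by blast
  define A where "A = opmul (opdag Ea) Eb"
  have pattern: "snd A = snd (opmul Ea Eb)"
    unfolding A_def by (rule snd_opmul_opdag)
  have phase: "fst A \<noteq> 0"
    unfolding A_def E by (intro opmul_phase_nonzero opdag_phase_nonzero) (simp_all add: onq_phase)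
  have "(\<exists>h\<in>Stab. comm_sign (opmul (onq i p) (onq k q)) h = -1)
      \<or> (\<exists>x\<in>gauge_reps. \<forall>j\<in>qubits. snd (opmul (onq i p) (onq k q)) j = snd x j)"
    using error_products_checked i k by blast
  then show ?thesis
  proof (elim disjE bexE)
    fix h assume h: "h \<in> Stab" "comm_sign (opmul (onq i p) (onq k q)) h = -1"
    have "fst (opmul h A) \<noteq> 0"
      using phase stab_phase[OF h(1)] by (simp add: opmul_phase_nonzero)
    then have "anticommute A h"
      using h comm_sign_same_pattern[OF pattern] E by (simp add: anticommute_iff_sign)
    then show ?thesis using h(1) A_def by blast
  next
    fix x assume x: "x \<in> gauge_reps"
      and agree: "\<forall>j\<in>qubits. snd (opmul (onq i p) (onq k q)) j = snd x j"
    have x_out: "\<forall>j. j \<notin> qubits \<longrightarrow> snd x j = PI"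
      using x gauge_reps_outside by blast
    have "snd (opmul (onq i p) (onq k q)) = snd x"
      by (rule pattern_eqI[OF _ x_out agree]) (simp add: snd_opmul)
    then have "snd A = snd x" using pattern E by simp
    moreover have "x \<in> gen (Stab \<union> Gauge)" using x gauge_reps_in_group by blast
    ultimately show ?thesis
      using in_up_to_phase_pattern phase A_def
        gen_phase_nonzero[OF stab_gauge_phase_nonzero] by blast
  qed
qed

theorem mainTheorem2:
  shows "(\<forall>s \<in> gen Stab. commute (onq 4 PX) s \<and> commute (opmul (onq 4 PZ) (onq 6 PZ)) s)
    \<and> (\<forall>Ea \<in> Errs. \<forall>Eb \<in> Errs.
         (\<exists>h \<in> Stab. anticommute (opmul (opdag Ea) Eb) h)
       \<or> in_up_to_phase (opmul (opdag Ea) Eb) (gen (Stab \<union> Gauge)))"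
  using gauge_commutes_stab_group errors_detected_or_gauge by blast

end
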